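(* Let $r_2\geq 3$ and let $c$ be an integer with $1\leq c\leq \frac{r_2-1}{2}$. Then there is no graph with parameters $(r_2,r_3)$ where $r_3=\binom{r_2}{2}-c$.
   Context: All graphs are finite, simple and undirected. The $K_3$-degree of a vertex $v$ is the number of triangles of $G$ containing $v$. A graph $G$ has parameters $(r_2,r_3)$ if every vertex has degree $r_2$ and every vertex has $K_3$-degree $r_3$. *)

theory Defs
  imports Main
begin

definition simple_graph :: "'a set \<Rightarrow> ('a \<Rightarrow> 'a \<Rightarrow> bool) \<Rightarrow> bool" where
  "simple_graph V E \<longleftrightarrow> finite V \<and> (\<forall>x y. E x y \<longrightarrow> x \<in> V \<and> y \<in> V)
     \<and> (\<forall>x y. E x y \<longrightarrow> E y x) \<and> (\<forall>x. \<not> E x x)"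

definition degree :: "'a set \<Rightarrow> ('a \<Rightarrow> 'a \<Rightarrow> bool) \<Rightarrow> 'a \<Rightarrow> nat" where
  "degree V E v = card {u \<in> V. E v u}"

definition triangles :: "'a set \<Rightarrow> ('a \<Rightarrow> 'a \<Rightarrow> bool) \<Rightarrow> 'a set set" where
  "triangles V E = {T. T \<subseteq> V \<and> card T = 3 \<and> (\<forall>x\<in>T. \<forall>y\<in>T. x \<noteq> y \<longrightarrow> E x y)}"

definition K3_degree :: "'a set \<Rightarrow> ('a \<Rightarrow> 'a \<Rightarrow> bool) \<Rightarrow> 'a \<Rightarrow> nat" where
  "K3_degree V E v = card {T \<in> triangles V E. v \<in> T}"

definition has_parameters :: "'a set \<Rightarrow> ('a \<Rightarrow> 'a \<Rightarrow> bool) \<Rightarrow> nat \<Rightarrow> nat \<Rightarrow> bool" where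
  "has_parameters V E r2 r3 \<longleftrightarrow>
     (\<forall>v\<in>V. degree V E v = r2) \<and> (\<forall>v\<in>V. K3_degree V E v = r3)"

end

theory Submission
  imports Defs
begin

text \<open>
  Triangles through v correspond to edges inside N(v), so in a graph with parameters
  (r, (r choose 2) - c) every neighbourhood N(v) contains exactly q = 2c ordered pairs of distinct
  non-adjacent vertices, and q < r. It therefore suffices to show that an r-regular graph in
  which every neighbourhood has at most q < r such pairs has only cliques as neighbourhoods.

  Call two vertices twins if they have the same closed neighbourhood N[-]. A neighbour u of x
  lying in no such pair of N(x) satisfies N[x] \<subseteq> N[u], hence N[u] = N[x] by regularity; so every
  twin class has at least s = r + 1 - q \<ge> 2 elements. If u \<in> N(y) is not a twin of y, pick
  z \<in> N[y] - N[u]: the whole twin class of z lies in N(y) - N[u], so u is the first entry of at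
  least s non-adjacent pairs of N(y). If N(x) is not a clique, it contains a neighbour y with
  N[y] \<noteq> N[x]. Summing this bound over the twin class of x (inside N(y)) and over the neighbours
  of x that are not its twins gives s (r + 1) \<le> 2 q, contradicting s \<ge> 2 and q < r.
\<close>

definition pairs_within :: "'a set \<Rightarrow> ('a \<Rightarrow> 'a \<Rightarrow> bool) \<Rightarrow> 'a set set" where
  "pairs_within N R = {e. e \<subseteq> N \<and> card e = 2 \<and> (\<forall>u\<in>e. \<forall>w\<in>e. u \<noteq> w \<longrightarrow> R u w)}"

lemma pairs_within_doubleton_iff:
  assumes "\<And>u w. R u w \<Longrightarrow> R w u" and "u \<noteq> w"
  shows "{u, w} \<in> pairs_within N R \<longleftrightarrow> u \<in> N \<and> w \<in> N \<and> R u w"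
  using assms unfolding pairs_within_def by auto

lemma finite_pairs_within: "finite N \<Longrightarrow> finite (pairs_within N R)"
  unfolding pairs_within_def by (rule finite_subset[of _ "Pow N"]) auto

lemma card_pairs_within_add_complement:
  assumes "finite N" and sym: "\<And>u w. R u w \<Longrightarrow> R w u"
  shows "card (pairs_within N R) + card (pairs_within N (\<lambda>u w. \<not> R u w)) = card N choose 2"
proof -
  have nsym: "\<not> R w u" if "\<not> R u w" for u w
    using that sym by blast
  have "{e. e \<subseteq> N \<and> card e = 2} = pairs_within N R \<union> pairs_within N (\<lambda>u w. \<not> R u w)"
  proof (intro equalityI subsetI)
    fix e assume "e \<in> {e. e \<subseteq> N \<and> card e = 2}"
    then obtain u w where "e = {u, w}" "u \<noteq> w" "e \<subseteq> N" by (auto simp: card_2_iff)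
    then show "e \<in> pairs_within N R \<union> pairs_within N (\<lambda>u w. \<not> R u w)"
      using pairs_within_doubleton_iff[of R u w N, OF sym]
        pairs_within_doubleton_iff[of "\<lambda>u w. \<not> R u w" u w N, OF nsym] by (cases "R u w") simp_all
  qed (auto simp: pairs_within_def)
  moreover have "pairs_within N R \<inter> pairs_within N (\<lambda>u w. \<not> R u w) = {}"
    unfolding pairs_within_def card_2_iff by blast
  ultimately show ?thesis
    using n_subsets[OF \<open>finite N\<close>, of 2] finite_pairs_within[OF \<open>finite N\<close>]
    by (metis card_Un_disjoint)
qed

lemma card_ordered_pairs_within:
  assumes "finite N" and sym: "\<And>u w. R u w \<Longrightarrow> R w u"
  shows "card {(u, w). u \<in> N \<and> w \<in> N \<and> u \<noteq> w \<and> R u w} = 2 * card (pairs_within N R)"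
proof -
  let ?P = "{(u, w). u \<in> N \<and> w \<in> N \<and> u \<noteq> w \<and> R u w}"
  let ?f = "\<lambda>(u, w). ({u, w}, u)"
  have inj: "inj_on ?f ?P"
    unfolding inj_on_def by (simp add: doubleton_eq_iff)
  have image: "?f ` ?P = Sigma (pairs_within N R) (\<lambda>e. e)"
  proof (intro equalityI image_subsetI subsetI)
    fix q assume "q \<in> ?P"
    then obtain u w where "q = (u, w)" "u \<noteq> w" "u \<in> N" "w \<in> N" "R u w" by blast
    then show "?f q \<in> Sigma (pairs_within N R) (\<lambda>e. e)"
      using pairs_within_doubleton_iff[of R u w N, OF sym] by simp
  next
    fix p assume "p \<in> Sigma (pairs_within N R) (\<lambda>e. e)"
    then obtain e u where p: "p = (e, u)" "u \<in> e" "e \<in> pairs_within N R" by blast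
    then obtain w where "e = {u, w}" "u \<noteq> w"
      unfolding pairs_within_def card_2_iff by blast
    with p have "(u, w) \<in> ?P"
      using pairs_within_doubleton_iff[of R u w N, OF sym] by blast
    with p \<open>e = {u, w}\<close> show "p \<in> ?f ` ?P" by force
  qed
  have "card ?P = card (Sigma (pairs_within N R) (\<lambda>e. e))"
    using card_image[OF inj] image by simp
  also have "\<dots> = (\<Sum>e\<in>pairs_within N R. card e)"
    using finite_pairs_within[OF \<open>finite N\<close>] by (rule card_SigmaI) (auto simp: pairs_within_def card_ge_0_finite)
  also have "\<dots> = 2 * card (pairs_within N R)"
    by (simp add: pairs_within_def)
  finally show ?thesis .
qed

definition nbhd :: "('a \<Rightarrow> 'a \<Rightarrow> bool) \<Rightarrow> 'a \<Rightarrow> 'a set" where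
  "nbhd E v = {u. E v u}"

definition closed_nbhd :: "('a \<Rightarrow> 'a \<Rightarrow> bool) \<Rightarrow> 'a \<Rightarrow> 'a set" where
  "closed_nbhd E v = insert v (nbhd E v)"

definition twins :: "'a set \<Rightarrow> ('a \<Rightarrow> 'a \<Rightarrow> bool) \<Rightarrow> 'a \<Rightarrow> 'a set" where
  "twins V E v = {u \<in> V. closed_nbhd E u = closed_nbhd E v}"

definition missing_pairs :: "('a \<Rightarrow> 'a \<Rightarrow> bool) \<Rightarrow> 'a \<Rightarrow> ('a \<times> 'a) set" where
  "missing_pairs E v = {(u, w). E v u \<and> E v w \<and> u \<noteq> w \<and> \<not> E u w}"

locale graph =
  fixes V :: "'a set" and E :: "'a \<Rightarrow> 'a \<Rightarrow> bool"
  assumes simple: "simple_graph V E"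
begin

lemma finite_V: "finite V"
  and edge_in_V: "E u v \<Longrightarrow> u \<in> V \<and> v \<in> V"
  and edge_sym: "E u v \<Longrightarrow> E v u"
  and not_edge_refl: "\<not> E v v"
  using simple unfolding simple_graph_def by blast+

lemma nbhd_subset_V: "nbhd E v \<subseteq> V"
  using edge_in_V unfolding nbhd_def by blast

lemma finite_nbhd: "finite (nbhd E v)"
  using finite_subset[OF nbhd_subset_V finite_V] .

lemma finite_twins: "finite (twins V E v)"
  using finite_V unfolding twins_def by simp

lemma degree_eq_card_nbhd: "degree V E v = card (nbhd E v)"
  unfolding degree_def nbhd_def using edge_in_V by metis

lemma not_mem_nbhd_self: "v \<notin> nbhd E v"
  unfolding nbhd_def using not_edge_refl by simp

lemma mem_closed_nbhd_commute: "u \<in> closed_nbhd E v \<longleftrightarrow> v \<in> closed_nbhd E u"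
  unfolding closed_nbhd_def nbhd_def using edge_sym by blast

lemma self_mem_twins: "v \<in> V \<Longrightarrow> v \<in> twins V E v"
  unfolding twins_def by simp

lemma missing_pairs_eq_Sigma:
  "missing_pairs E v = Sigma (nbhd E v) (\<lambda>u. nbhd E v - closed_nbhd E u)"
  unfolding missing_pairs_def nbhd_def closed_nbhd_def by auto

lemma finite_missing_pairs: "finite (missing_pairs E v)"
  unfolding missing_pairs_eq_Sigma using finite_nbhd by simp

lemma K3_degree_eq_card_pairs_within:
  assumes "v \<in> V"
  shows "K3_degree V E v = card (pairs_within (nbhd E v) E)"
proof -
  have "bij_betw (insert v) (pairs_within (nbhd E v) E) {T \<in> triangles V E. v \<in> T}"
  proof (rule bij_betw_byWitness[where f' = "\<lambda>T. T - {v}"])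
    show "\<forall>e \<in> pairs_within (nbhd E v) E. insert v e - {v} = e"
      using not_mem_nbhd_self unfolding pairs_within_def by blast
    show "\<forall>T \<in> {T \<in> triangles V E. v \<in> T}. insert v (T - {v}) = T"
      by blast
    show "insert v ` pairs_within (nbhd E v) E \<subseteq> {T \<in> triangles V E. v \<in> T}"
    proof (rule image_subsetI)
      fix e assume "e \<in> pairs_within (nbhd E v) E"
      then obtain u w where "e = {u, w}" "u \<noteq> w" "E v u" "E v w" "E u w"
        unfolding pairs_within_def card_2_iff nbhd_def by blast
      moreover have "u \<noteq> v" "w \<noteq> v"
        using \<open>E v u\<close> \<open>E v w\<close> not_edge_refl by blast+
      ultimately show "insert v e \<in> {T \<in> triangles V E. v \<in> T}"
        unfolding triangles_def using \<open>v \<in> V\<close> edge_in_V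
          edge_sym[OF \<open>E v u\<close>] edge_sym[OF \<open>E v w\<close>] edge_sym[OF \<open>E u w\<close>]
        by (auto simp: card_3_iff)
    qed
    show "(\<lambda>T. T - {v}) ` {T \<in> triangles V E. v \<in> T} \<subseteq> pairs_within (nbhd E v) E"
    proof (rule image_subsetI)
      fix T assume "T \<in> {T \<in> triangles V E. v \<in> T}"
      then have T: "card T = 3" "v \<in> T" "\<forall>x\<in>T. \<forall>y\<in>T. x \<noteq> y \<longrightarrow> E x y"
        unfolding triangles_def by auto
      then have "card (T - {v}) = 2"
        using card_ge_0_finite[of T] by (simp add: card_Diff_singleton)
      moreover have "T - {v} \<subseteq> nbhd E v"
        using T unfolding nbhd_def by auto
      ultimately show "T - {v} \<in> pairs_within (nbhd E v) E"
        unfolding pairs_within_def using T(3) by auto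
    qed
  qed
  then show ?thesis
    unfolding K3_degree_def by (simp add: bij_betw_same_card)
qed

lemma card_missing_pairs_add_K3_degree:
  assumes "v \<in> V"
  shows "card (missing_pairs E v) + 2 * K3_degree V E v = 2 * (degree V E v choose 2)"
proof -
  have non_edge_sym: "\<not> E w u" if "\<not> E u w" for u w
    using that edge_sym by auto
  have "missing_pairs E v = {(u, w). u \<in> nbhd E v \<and> w \<in> nbhd E v \<and> u \<noteq> w \<and> \<not> E u w}"
    unfolding missing_pairs_def nbhd_def by simp
  then have "card (missing_pairs E v) = 2 * card (pairs_within (nbhd E v) (\<lambda>u w. \<not> E u w))"
    using card_ordered_pairs_within[of "nbhd E v" "\<lambda>u w. \<not> E u w", OF finite_nbhd non_edge_sym]
    by simp
  then show ?thesis
    using card_pairs_within_add_complement[of "nbhd E v" E, OF finite_nbhd edge_sym]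
      K3_degree_eq_card_pairs_within[OF assms] degree_eq_card_nbhd[of v] by simp
qed

lemma twins_subset_nbhd_diff_closed_nbhd:
  assumes "E x y" and "z \<in> closed_nbhd E x" and "z \<notin> closed_nbhd E y"
  shows "twins V E z \<subseteq> nbhd E x - closed_nbhd E y"
proof
  fix t assume "t \<in> twins V E z"
  then have t: "closed_nbhd E t = closed_nbhd E z"
    unfolding twins_def by simp
  have "y \<in> closed_nbhd E x"
    using \<open>E x y\<close> unfolding closed_nbhd_def nbhd_def by simp
  then have "t \<noteq> x"
    using t assms(3) mem_closed_nbhd_commute by metis
  moreover have "t \<in> closed_nbhd E x"
    using t assms(2) mem_closed_nbhd_commute by metis
  moreover have "t \<notin> closed_nbhd E y"
    using t assms(3) mem_closed_nbhd_commute by metis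
  ultimately show "t \<in> nbhd E x - closed_nbhd E y"
    unfolding closed_nbhd_def by simp
qed

lemma twins_subset_nbhd_diff_twins:
  assumes "E x y" and "closed_nbhd E x \<noteq> closed_nbhd E y"
  shows "twins V E x \<subseteq> nbhd E y - twins V E y"
proof
  fix t assume "t \<in> twins V E x"
  then have t: "closed_nbhd E t = closed_nbhd E x"
    unfolding twins_def by simp
  have "y \<in> closed_nbhd E t"
    using t \<open>E x y\<close> unfolding closed_nbhd_def nbhd_def by simp
  then have "t \<in> closed_nbhd E y"
    using mem_closed_nbhd_commute by metis
  moreover have "t \<noteq> y" and "t \<notin> twins V E y"
    using t assms(2) unfolding twins_def by auto
  ultimately show "t \<in> nbhd E y - twins V E y"
    unfolding closed_nbhd_def by simp
qed

end

locale regular_graph = graph +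
  fixes r :: nat
  assumes regular: "v \<in> V \<Longrightarrow> degree V E v = r"
begin

lemma card_nbhd: "v \<in> V \<Longrightarrow> card (nbhd E v) = r"
  using regular degree_eq_card_nbhd by simp

lemma card_closed_nbhd: "v \<in> V \<Longrightarrow> card (closed_nbhd E v) = r + 1"
  unfolding closed_nbhd_def using card_nbhd finite_nbhd not_mem_nbhd_self by simp

lemma closed_nbhd_subset_imp_eq:
  assumes "u \<in> V" and "v \<in> V" and "closed_nbhd E u \<subseteq> closed_nbhd E v"
  shows "closed_nbhd E u = closed_nbhd E v"
  using card_subset_eq[OF _ assms(3)] card_closed_nbhd assms(1,2) finite_nbhd
  unfolding closed_nbhd_def by simp

lemma card_twins_add_card_missing_pairs:
  assumes "x \<in> V"
  shows "r + 1 \<le> card (twins V E x) + card (missing_pairs E x)"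
proof -
  define D where "D = fst ` missing_pairs E x"
  have "insert x (nbhd E x - D) \<subseteq> twins V E x"
  proof
    fix u assume u: "u \<in> insert x (nbhd E x - D)"
    show "u \<in> twins V E x"
    proof (cases "u = x")
      case False
      then have "E x u" and "u \<notin> D"
        using u unfolding nbhd_def by auto
      have "E u w" if "E x w" "w \<noteq> u" for w
      proof (rule ccontr)
        assume "\<not> E u w"
        with \<open>E x u\<close> that have "(u, w) \<in> missing_pairs E x"
          unfolding missing_pairs_def by simp
        with \<open>u \<notin> D\<close> show False
          unfolding D_def by force
      qed
      then have "closed_nbhd E x \<subseteq> closed_nbhd E u"
        using edge_sym[OF \<open>E x u\<close>] unfolding closed_nbhd_def nbhd_def by auto
      then have "closed_nbhd E x = closed_nbhd E u"
        using closed_nbhd_subset_imp_eq \<open>x \<in> V\<close> edge_in_V[OF \<open>E x u\<close>] by blast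
      then show ?thesis
        using edge_in_V[OF \<open>E x u\<close>] unfolding twins_def by simp
    qed (simp add: self_mem_twins assms)
  qed
  then have "card (insert x (nbhd E x - D)) \<le> card (twins V E x)"
    using finite_twins by (rule card_mono[rotated])
  moreover have "card (insert x (nbhd E x - D)) = card (nbhd E x - D) + 1"
    using finite_nbhd not_mem_nbhd_self by simp
  moreover have "card (nbhd E x) - card D \<le> card (nbhd E x - D)"
    by (rule diff_card_le_card_Diff) (simp add: D_def finite_missing_pairs)
  moreover have "card D \<le> card (missing_pairs E x)"
    unfolding D_def using finite_missing_pairs by (rule card_image_le)
  ultimately show ?thesis
    using card_nbhd[OF assms] by linarith
qed

lemma closed_nbhd_diff_nonempty:
  assumes "u \<in> V" and "v \<in> V" and "closed_nbhd E u \<noteq> closed_nbhd E v"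
  obtains z where "z \<in> closed_nbhd E u" and "z \<notin> closed_nbhd E v"
  using closed_nbhd_subset_imp_eq[OF assms(1,2)] assms(3) by blast

lemma mult_card_le_card_missing_pairs:
  assumes twins_ge: "\<And>v. v \<in> V \<Longrightarrow> s \<le> card (twins V E v)"
    and "y \<in> V" and S: "S \<subseteq> nbhd E y - twins V E y"
  shows "s * card S \<le> card (missing_pairs E y)"
proof -
  have "s \<le> card (nbhd E y - closed_nbhd E u)" if "u \<in> S" for u
  proof -
    have "E y u" and "u \<in> V" and "closed_nbhd E y \<noteq> closed_nbhd E u"
      using that S edge_in_V unfolding nbhd_def twins_def by auto
    then obtain z where z: "z \<in> closed_nbhd E y" "z \<notin> closed_nbhd E u"
      using closed_nbhd_diff_nonempty \<open>y \<in> V\<close> by metis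
    then have "z \<in> V"
      using \<open>y \<in> V\<close> edge_in_V unfolding closed_nbhd_def nbhd_def by auto
    have "s \<le> card (twins V E z)"
      using twins_ge[OF \<open>z \<in> V\<close>] .
    also have "\<dots> \<le> card (nbhd E y - closed_nbhd E u)"
      using twins_subset_nbhd_diff_closed_nbhd[OF \<open>E y u\<close> z] finite_nbhd
      by (simp add: card_mono)
    finally show ?thesis .
  qed
  then have "s * card S \<le> (\<Sum>u\<in>S. card (nbhd E y - closed_nbhd E u))"
    using sum_mono[of S "\<lambda>_. s"] by (simp add: mult.commute)
  also have "\<dots> = card (Sigma S (\<lambda>u. nbhd E y - closed_nbhd E u))"
    using finite_subset[OF S] finite_nbhd by simp
  also have "\<dots> \<le> card (missing_pairs E y)"
    unfolding missing_pairs_eq_Sigma using S finite_nbhd by (intro card_mono) auto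
  finally show ?thesis .
qed

theorem missing_pairs_empty_if_card_le:
  assumes few: "\<And>v. v \<in> V \<Longrightarrow> card (missing_pairs E v) \<le> q" and "q < r" and "x \<in> V"
  shows "missing_pairs E x = {}"
proof (rule ccontr)
  assume "missing_pairs E x \<noteq> {}"
  then obtain y z where "E x y" "E x z" "\<not> E y z" "y \<noteq> z"
    unfolding missing_pairs_def by auto
  then have "z \<in> closed_nbhd E x" "z \<notin> closed_nbhd E y"
    unfolding closed_nbhd_def nbhd_def by auto
  then have "closed_nbhd E x \<noteq> closed_nbhd E y"
    by blast
  define s where "s = r + 1 - q"
  have twins_ge: "s \<le> card (twins V E v)" if "v \<in> V" for v
    using card_twins_add_card_missing_pairs[OF that] few[OF that] unfolding s_def by linarith
  have "twins V E x \<subseteq> nbhd E y - twins V E y"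
    by (rule twins_subset_nbhd_diff_twins[OF \<open>E x y\<close> \<open>closed_nbhd E x \<noteq> closed_nbhd E y\<close>])
  then have "s * card (twins V E x) \<le> card (missing_pairs E y)"
    using mult_card_le_card_missing_pairs[OF twins_ge] edge_in_V[OF \<open>E x y\<close>] by blast
  also have "\<dots> \<le> q"
    using few edge_in_V[OF \<open>E x y\<close>] by blast
  finally have twins_bound: "s * card (twins V E x) \<le> q" .
  have rest_bound: "s * card (nbhd E x - twins V E x) \<le> q"
    using mult_card_le_card_missing_pairs[OF twins_ge \<open>x \<in> V\<close>, of "nbhd E x - twins V E x"]
      few[OF \<open>x \<in> V\<close>] by simp
  have "r + 1 \<le> card (nbhd E x - twins V E x) + card (twins V E x)"
  proof -
    have "closed_nbhd E x \<subseteq> (nbhd E x - twins V E x) \<union> twins V E x"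
      using self_mem_twins[OF \<open>x \<in> V\<close>] unfolding closed_nbhd_def by auto
    then have "card (closed_nbhd E x) \<le> card ((nbhd E x - twins V E x) \<union> twins V E x)"
      using finite_nbhd finite_twins by (intro card_mono) auto
    also have "\<dots> = card (nbhd E x - twins V E x) + card (twins V E x)"
      using finite_nbhd finite_twins by (intro card_Un_disjoint) auto
    finally show ?thesis
      using card_closed_nbhd[OF \<open>x \<in> V\<close>] by simp
  qed
  then have "s * (r + 1) \<le> s * card (nbhd E x - twins V E x) + s * card (twins V E x)"
    by (metis add_mult_distrib2 mult_le_mono2)
  also have "\<dots> \<le> 2 * q"
    using twins_bound rest_bound by simp
  finally have "s * (r + 1) \<le> 2 * q" .
  moreover have "2 * (r + 1) \<le> s * (r + 1)"
    using \<open>q < r\<close> unfolding s_def by (intro mult_le_mono1) simp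
  ultimately have "2 * (r + 1) \<le> 2 * q"
    by (rule le_trans[rotated])
  with \<open>q < r\<close> show False
    by simp
qed

end

theorem theorem3p6:
  fixes V :: "'a set" and E :: "'a \<Rightarrow> 'a \<Rightarrow> bool" and r2 c :: nat
  assumes "r2 \<ge> 3" and "1 \<le> c" and "2 * c \<le> r2 - 1"
    and "simple_graph V E" and "V \<noteq> {}"
  shows "\<not> has_parameters V E r2 ((r2 choose 2) - c)"
proof
  assume params: "has_parameters V E r2 ((r2 choose 2) - c)"
  then interpret regular_graph V E r2
    using assms(4) unfolding has_parameters_def by unfold_locales auto
  have "r2 - 1 \<le> r2 choose 2"
    using \<open>r2 \<ge> 3\<close> by (cases r2) (simp_all add: numeral_2_eq_2)
  then have "c \<le> r2 choose 2"
    using \<open>2 * c \<le> r2 - 1\<close> by linarith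
  have card_missing_pairs: "card (missing_pairs E v) = 2 * c" if "v \<in> V" for v
    using card_missing_pairs_add_K3_degree[OF that] params that \<open>c \<le> r2 choose 2\<close>
    unfolding has_parameters_def by auto
  obtain x where "x \<in> V"
    using \<open>V \<noteq> {}\<close> by blast
  moreover have "2 * c < r2"
    using \<open>2 * c \<le> r2 - 1\<close> \<open>r2 \<ge> 3\<close> by linarith
  ultimately have "missing_pairs E x = {}"
    using missing_pairs_empty_if_card_le[of "2 * c"] card_missing_pairs by simp
  then show False
    using card_missing_pairs[OF \<open>x \<in> V\<close>] \<open>1 \<le> c\<close> by simp
qed

end
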